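(* Let $I\subset\mathbb R$ be a bounded closed non-degenerate interval and $f\in\bigcap_{r\ge1}L^r(I)$. If $f^-\in L^\infty(I)$ or $f^+\in L^\infty(I)$, then $\lim_{r\to+\infty}\tau_r^f=\frac12\big({\rm essinf}_If+{\rm esssup}_If\big)$ (in $\overline{\mathbb R}$).
   Context: For $f\in L^r(I)$ with $r>1$, $\tau_r^f$ denotes the unique real number minimizing $t\mapsto\|f-t\|_{L^r(I)}$. $f^+=\max\{f,0\}$, $f^-=\max\{-f,0\}$. *)

theory Defs
  imports "HOL-Analysis.Analysis" "HOL-Probability.Essential_Supremum"
begin

definition essinf :: "'a measure \<Rightarrow> ('a \<Rightarrow> ereal) \<Rightarrow> ereal" where
  "essinf M f = Sup {z. AE x in M. z \<le> f x}"

definition Lr_norm :: "'a measure \<Rightarrow> real \<Rightarrow> ('a \<Rightarrow> real) \<Rightarrow> real" where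
  "Lr_norm M r g = (\<integral>x. \<bar>g x\<bar> powr r \<partial>M) powr (1 / r)"

definition tau :: "'a measure \<Rightarrow> real \<Rightarrow> ('a \<Rightarrow> real) \<Rightarrow> real" where
  "tau M r f = (THE t. \<forall>s. Lr_norm M r (\<lambda>x. f x - t) \<le> Lr_norm M r (\<lambda>x. f x - s))"

end

theory Submission
  imports Defs
begin

(* tau_r minimises the convex, coercive function t \<mapsto> \<integral>|f - t|^r, strictly convex for r \<ge> 2.
   If L \<le> f \<le> U a.e. with L = ess inf f, then for t \<ge> (L + U)/2 + \<epsilon> the moment about t is at
   least \<mu>{f < L + \<epsilon>/2} ((U - L)/2 + \<epsilon>/2)^r, while the moment about (L + U)/2 is at most
   \<mu>(I) ((U - L)/2)^r; for large r the first wins, so eventually tau_r < (L + U)/2 + \<epsilon>.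
   If f is bounded below but essentially unbounded above, moving the centre from t \<le> K to a point
   s further right costs at most \<mu>(I) d^r but saves (2d)^(r-1) on the set of positive measure where
   f > s + 2d, so eventually tau_r > K. The remaining bounds follow by passing to -f, whose tau_r
   is -tau_r. *)

lemma convex_on_powr_nonneg:
  fixes r :: real
  assumes "1 \<le> r"
  shows "convex_on {0..} (\<lambda>x. x powr r)"
proof (rule convex_onI)
  fix u x y :: real
  assume u: "0 < u" "u < 1" and xy: "x \<in> {0..}" "y \<in> {0..}"
  have scale: "(v * z) powr r \<le> v * z powr r" if "0 < v" "v \<le> 1" "0 \<le> z" for v z :: real
    using powr_le_one_le[OF that(1,2) assms] that by (simp add: powr_mult mult_right_mono)
  show "((1 - u) *\<^sub>R x + u *\<^sub>R y) powr r \<le> (1 - u) * x powr r + u * y powr r"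
  proof (cases "x = 0 \<or> y = 0")
    case True
    then show ?thesis
      using scale[of u y] scale[of "1 - u" x] u xy by auto
  next
    case False
    then show ?thesis
      using convex_onD[OF powr_convex[OF assms], of u x y] u xy by auto
  qed
qed simp

lemma convex_on_abs_powr:
  fixes r :: real
  assumes "1 \<le> r"
  shows "convex_on UNIV (\<lambda>x. \<bar>x\<bar> powr r)"
proof (rule convex_onI)
  fix u x y :: real
  assume u: "0 < u" "u < 1"
  have "\<bar>(1 - u) *\<^sub>R x + u *\<^sub>R y\<bar> \<le> (1 - u) * \<bar>x\<bar> + u * \<bar>y\<bar>"
    using u abs_triangle_ineq[of "(1 - u) * x" "u * y"] by (simp add: abs_mult)
  then have "\<bar>(1 - u) *\<^sub>R x + u *\<^sub>R y\<bar> powr r \<le> ((1 - u) * \<bar>x\<bar> + u * \<bar>y\<bar>) powr r"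
    using assms by (intro powr_mono2) auto
  also have "\<dots> \<le> (1 - u) * \<bar>x\<bar> powr r + u * \<bar>y\<bar> powr r"
    using convex_onD[OF convex_on_powr_nonneg[OF assms], of u "\<bar>x\<bar>" "\<bar>y\<bar>"] u by simp
  finally show "\<bar>(1 - u) *\<^sub>R x + u *\<^sub>R y\<bar> powr r \<le> (1 - u) * \<bar>x\<bar> powr r + u * \<bar>y\<bar> powr r" .
qed simp

(* Strict convexity of |x|^r is inherited from that of x^2 through |x|^r = (x^2)^(r/2), which
   needs r/2 \<ge> 1; hence uniqueness of tau_r is only established for r \<ge> 2. *)
lemma abs_powr_midpoint_less:
  fixes p q r :: real
  assumes "2 \<le> r" "p \<noteq> q"
  shows "\<bar>(p + q) / 2\<bar> powr r < (\<bar>p\<bar> powr r + \<bar>q\<bar> powr r) / 2"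
proof -
  have sq: "\<bar>z\<bar> powr r = (z\<^sup>2) powr (r / 2)" for z :: real
    using powr_powr[of "\<bar>z\<bar>" 2 "r / 2"] by simp
  have "0 < (p - q)\<^sup>2"
    using assms(2) by simp
  then have "((p + q) / 2)\<^sup>2 < (1 - 1 / 2) *\<^sub>R p\<^sup>2 + (1 / 2) *\<^sub>R q\<^sup>2"
    by (simp add: power2_eq_square algebra_simps)
  then have "\<bar>(p + q) / 2\<bar> powr r < ((1 - 1 / 2) *\<^sub>R p\<^sup>2 + (1 / 2) *\<^sub>R q\<^sup>2) powr (r / 2)"
    unfolding sq using assms by (intro powr_less_mono2) auto
  also have "\<dots> \<le> (1 - 1 / 2) * (p\<^sup>2) powr (r / 2) + 1 / 2 * (q\<^sup>2) powr (r / 2)"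
    using assms by (intro convex_onD[OF convex_on_powr_nonneg]) auto
  finally show ?thesis
    unfolding sq by simp
qed

lemma powr_diff_ge_powr_minus_one:
  fixes r y z :: real
  assumes "1 \<le> r" "0 \<le> z" "z + 1 \<le> y"
  shows "y powr (r - 1) \<le> y powr r - z powr r"
proof -
  have "z powr r \<le> z * y powr (r - 1)"
  proof (cases "z = 0")
    case False
    then have "z powr r = z * z powr (r - 1)"
      using assms by (simp add: powr_mult_base)
    also have "\<dots> \<le> z * y powr (r - 1)"
      using assms by (intro mult_left_mono powr_mono2) auto
    finally show ?thesis .
  qed (use assms in simp)
  also have "\<dots> \<le> (y - 1) * y powr (r - 1)"
    using assms by (intro mult_right_mono) auto
  also have "\<dots> = y powr r - y powr (r - 1)"
    using assms by (simp add: algebra_simps powr_mult_base)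
  finally show ?thesis
    by simp
qed

lemma abs_powr_shift_le:
  fixes r s t y d :: real
  assumes "1 \<le> r" "1 \<le> d" "s - d \<le> y" "t + 1 \<le> s"
  shows "\<bar>y - s\<bar> powr r - \<bar>y - t\<bar> powr r
    \<le> d powr r - (if s + 2 * d < y then (2 * d) powr (r - 1) else 0)"
proof -
  consider "y \<le> s" | "s < y" "y \<le> s + 2 * d" | "s + 2 * d < y"
    by linarith
  then show ?thesis
  proof cases
    case 1
    then have "\<bar>y - s\<bar> powr r \<le> d powr r"
      using assms by (intro powr_mono2) auto
    then have "\<bar>y - s\<bar> powr r - \<bar>y - t\<bar> powr r \<le> d powr r"
      using powr_ge_zero[of "\<bar>y - t\<bar>" r] by linarith
    then show ?thesis
      using 1 assms by simp
  next
    case 2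
    then have "\<bar>y - s\<bar> powr r \<le> \<bar>y - t\<bar> powr r"
      using assms by (intro powr_mono2) auto
    then have "\<bar>y - s\<bar> powr r - \<bar>y - t\<bar> powr r \<le> d powr r"
      using powr_ge_zero[of d r] by linarith
    then show ?thesis
      using 2 by simp
  next
    case 3
    have "(2 * d) powr (r - 1) \<le> (y - t) powr (r - 1)"
      using 3 assms by (intro powr_mono2) auto
    also have "\<dots> \<le> (y - t) powr r - (y - s) powr r"
      using 3 assms by (intro powr_diff_ge_powr_minus_one) auto
    finally have "(y - s) powr r - (y - t) powr r \<le> d powr r - (2 * d) powr (r - 1)"
      using powr_ge_zero[of d r] by linarith
    then show ?thesis
      using 3 assms by simp
  qed
qed

lemma eventually_mult_powr_less:
  fixes \<mu> \<alpha> D E :: real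
  assumes "0 \<le> D" "D < E" "0 < \<alpha>"
  shows "\<forall>\<^sub>F r in at_top. \<mu> * D powr r < \<alpha> * E powr r"
proof (cases "D = 0")
  case True
  then show ?thesis
    using assms by simp
next
  case False
  then have D: "0 < D"
    using assms by simp
  have "filterlim (\<lambda>r. (E / D) powr r) at_top at_top"
    using D assms unfolding powr_def
    by (auto intro!: filterlim_compose[OF exp_at_top] filterlim_ident
        filterlim_at_top_mult_tendsto_pos[OF tendsto_const])
  then have "\<forall>\<^sub>F r in at_top. \<mu> / \<alpha> < (E / D) powr r"
    by (simp add: filterlim_at_top_dense)
  then show ?thesis
  proof eventually_elim
    case (elim r)
    then have "\<mu> < \<alpha> * (E powr r / D powr r)"
      using D assms by (simp add: powr_divide field_simps)
    then show ?case
      using D by (simp add: field_simps)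
  qed
qed

lemma essinf_eq_uminus_esssup:
  fixes g :: "'a \<Rightarrow> ereal"
  assumes [measurable]: "g \<in> borel_measurable M"
  shows "essinf M g = - esssup M (\<lambda>x. - g x)"
proof -
  have uminus_measurable [measurable]: "(\<lambda>x. - g x) \<in> borel_measurable M"
    by measurable
  have "uminus ` {z. AE x in M. - g x \<le> z} = {z. AE x in M. z \<le> g x}"
  proof (intro equalityI subsetI)
    fix w
    assume "w \<in> uminus ` {z. AE x in M. - g x \<le> z}"
    then show "w \<in> {z. AE x in M. z \<le> g x}"
      by (auto elim!: eventually_mono simp: ereal_uminus_le_reorder)
  next
    fix w
    assume "w \<in> {z. AE x in M. z \<le> g x}"
    then have "- w \<in> {z. AE x in M. - g x \<le> z}"
      by (auto elim!: eventually_mono)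
    then show "w \<in> uminus ` {z. AE x in M. - g x \<le> z}"
      by (rule rev_image_eqI) simp
  qed
  then show ?thesis
    unfolding essinf_def esssup_eq_AE[OF uminus_measurable]
      ereal_Sup_uminus_image_eq[symmetric]
    by simp
qed

lemma essinf_AE:
  fixes g :: "'a \<Rightarrow> ereal"
  assumes "g \<in> borel_measurable M"
  shows "AE x in M. essinf M g \<le> g x"
  using esssup_AE[of "\<lambda>x. - g x" M] unfolding essinf_eq_uminus_esssup[OF assms]
  by (auto elim!: eventually_mono simp: ereal_uminus_le_reorder)

lemma essinf_pos_measure:
  fixes g :: "'a \<Rightarrow> ereal"
  assumes [measurable]: "g \<in> borel_measurable M" and "essinf M g < z"
  shows "emeasure M {x \<in> space M. g x < z} > 0"
proof (rule ccontr)
  assume "\<not> ?thesis"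
  then have "{x \<in> space M. g x < z} \<in> null_sets M"
    by (intro null_setsI) (auto simp: not_gr_zero)
  then have "AE x in M. z \<le> g x"
    by (rule AE_I') (auto simp: not_le)
  then have "z \<le> essinf M g"
    unfolding essinf_def by (intro Sup_upper) simp
  then show False
    using assms(2) by simp
qed

locale finite_moments = finite_measure M for M :: "'a measure" +
  fixes f :: "'a \<Rightarrow> real"
  assumes measure_space_pos: "0 < measure M (space M)"
    and borel_measurable_f [measurable]: "f \<in> borel_measurable M"
    and integrable_abs_powr: "1 \<le> r \<Longrightarrow> integrable M (\<lambda>x. \<bar>f x\<bar> powr r)"
begin

lemma AE_const_iff: "(AE x in M. P) \<longleftrightarrow> P"
  using measure_space_pos ae_filter_eq_bot_iff[of M]
  by (cases P) (auto simp: emeasure_eq_measure)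

lemma essinf_neq_PInfty: "essinf M (\<lambda>x. ereal (f x)) \<noteq> \<infinity>"
  using essinf_AE[of "\<lambda>x. ereal (f x)" M] by (auto simp: AE_const_iff)

lemma esssup_neq_MInfty: "esssup M (\<lambda>x. ereal (f x)) \<noteq> -\<infinity>"
  using esssup_AE[of "\<lambda>x. ereal (f x)" M] by (auto simp: AE_const_iff)

definition moment :: "real \<Rightarrow> real \<Rightarrow> real" where
  "moment r t = (\<integral>x. \<bar>f x - t\<bar> powr r \<partial>M)"

lemma integrable_abs_diff_powr:
  assumes "1 \<le> r"
  shows "integrable M (\<lambda>x. \<bar>f x - t\<bar> powr r)"
proof (rule Bochner_Integration.integrable_bound)
  show "integrable M (\<lambda>x. 2 powr r * (\<bar>f x\<bar> powr r + \<bar>t\<bar> powr r))"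
    using integrable_abs_powr[OF assms] by (intro integrable_mult_right Bochner_Integration.integrable_add) auto
  show "AE x in M. norm (\<bar>f x - t\<bar> powr r) \<le> norm (2 powr r * (\<bar>f x\<bar> powr r + \<bar>t\<bar> powr r))"
  proof (rule AE_I2)
    fix x
    have "\<bar>f x - t\<bar> powr r \<le> (2 * max \<bar>f x\<bar> \<bar>t\<bar>) powr r"
      using assms by (intro powr_mono2) auto
    also have "\<dots> \<le> 2 powr r * (\<bar>f x\<bar> powr r + \<bar>t\<bar> powr r)"
      by (auto simp: powr_mult max_def)
    finally show "norm (\<bar>f x - t\<bar> powr r) \<le> norm (2 powr r * (\<bar>f x\<bar> powr r + \<bar>t\<bar> powr r))"
      by simp
  qed
qed measurable

lemma moment_nonneg: "0 \<le> moment r t"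
  unfolding moment_def by (intro integral_nonneg_AE) auto

lemma convex_on_moment:
  assumes "1 \<le> r"
  shows "convex_on UNIV (moment r)"
proof (rule convex_onI)
  fix u x y :: real
  assume u: "0 < u" "u < 1"
  have "moment r ((1 - u) *\<^sub>R x + u *\<^sub>R y)
      \<le> (\<integral>z. (1 - u) * \<bar>f z - x\<bar> powr r + u * \<bar>f z - y\<bar> powr r \<partial>M)"
    unfolding moment_def
  proof (intro integral_mono integrable_abs_diff_powr assms)
    show "integrable M (\<lambda>z. (1 - u) * \<bar>f z - x\<bar> powr r + u * \<bar>f z - y\<bar> powr r)"
      using integrable_abs_diff_powr[OF assms] by auto
    fix z
    have "f z - ((1 - u) *\<^sub>R x + u *\<^sub>R y) = (1 - u) *\<^sub>R (f z - x) + u *\<^sub>R (f z - y)"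
      by (simp add: algebra_simps)
    then show "\<bar>f z - ((1 - u) *\<^sub>R x + u *\<^sub>R y)\<bar> powr r
        \<le> (1 - u) * \<bar>f z - x\<bar> powr r + u * \<bar>f z - y\<bar> powr r"
      using convex_onD[OF convex_on_abs_powr[OF assms], of u "f z - x" "f z - y"] u by simp
  qed
  also have "\<dots> = (1 - u) * moment r x + u * moment r y"
    unfolding moment_def using integrable_abs_diff_powr[OF assms] by simp
  finally show "moment r ((1 - u) *\<^sub>R x + u *\<^sub>R y) \<le> (1 - u) * moment r x + u * moment r y" .
qed simp

lemma moment_ge_linear:
  assumes "1 \<le> r"
  shows "measure M (space M) * (\<bar>t\<bar> - 1) - (\<integral>x. \<bar>f x\<bar> \<partial>M) \<le> moment r t"
proof -
  have integrable_abs: "integrable M (\<lambda>x. \<bar>f x\<bar>)"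
    using integrable_abs_powr[of 1] by simp
  have "measure M (space M) * (\<bar>t\<bar> - 1) - (\<integral>x. \<bar>f x\<bar> \<partial>M) = (\<integral>x. \<bar>t\<bar> - 1 - \<bar>f x\<bar> \<partial>M)"
    using integrable_abs by simp
  also have "\<dots> \<le> moment r t"
    unfolding moment_def
  proof (intro integral_mono integrable_abs_diff_powr assms)
    show "integrable M (\<lambda>x. \<bar>t\<bar> - 1 - \<bar>f x\<bar>)"
      using integrable_abs by auto
    fix x
    have "\<bar>f x - t\<bar> \<le> \<bar>f x - t\<bar> powr r" if "1 \<le> \<bar>f x - t\<bar>"
      using powr_mono[OF assms that] that by simp
    then show "\<bar>t\<bar> - 1 - \<bar>f x\<bar> \<le> \<bar>f x - t\<bar> powr r"
      using powr_ge_zero[of "\<bar>f x - t\<bar>" r] by linarith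
  qed
  finally show ?thesis .
qed

lemma moment_has_minimizer:
  assumes "1 \<le> r"
  obtains t where "\<And>s. moment r t \<le> moment r s"
proof -
  define R where "R = 1 + (moment r 0 + (\<integral>x. \<bar>f x\<bar> \<partial>M)) / measure M (space M)"
  have "0 \<le> (\<integral>x. \<bar>f x\<bar> \<partial>M)"
    by simp
  then have "1 \<le> R"
    unfolding R_def using moment_nonneg measure_space_pos by simp
  have far: "moment r 0 < moment r s" if "R < \<bar>s\<bar>" for s
  proof -
    have "(moment r 0 + (\<integral>x. \<bar>f x\<bar> \<partial>M)) / measure M (space M) < \<bar>s\<bar> - 1"
      using that by (simp add: R_def)
    then have "moment r 0 < measure M (space M) * (\<bar>s\<bar> - 1) - (\<integral>x. \<bar>f x\<bar> \<partial>M)"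
      using measure_space_pos by (simp add: pos_divide_less_eq mult.commute)
    also have "\<dots> \<le> moment r s"
      by (rule moment_ge_linear[OF assms])
    finally show ?thesis .
  qed
  have "continuous_on {-R..R} (moment r)"
    using convex_on_continuous[OF open_UNIV convex_on_moment[OF assms]]
    by (rule continuous_on_subset) simp
  moreover have "{-R..R} \<noteq> {}"
    using \<open>1 \<le> R\<close> by simp
  ultimately obtain t where "t \<in> {-R..R}" and near: "\<forall>s\<in>{-R..R}. moment r t \<le> moment r s"
    using continuous_attains_inf[OF compact_Icc] by blast
  have "moment r t \<le> moment r s" for s
  proof (cases "s \<in> {-R..R}")
    case False
    then have "moment r 0 < moment r s"
      by (intro far) auto
    moreover have "moment r t \<le> moment r 0"
      using near \<open>1 \<le> R\<close> by simp
    ultimately show ?thesis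
      by linarith
  qed (use near in blast)
  then show ?thesis
    by (rule that)
qed

lemma moment_midpoint_less:
  assumes "2 \<le> r" "t1 \<noteq> t2"
  shows "moment r ((t1 + t2) / 2) < (moment r t1 + moment r t2) / 2"
proof -
  have r: "1 \<le> r"
    using assms(1) by simp
  have "moment r ((t1 + t2) / 2) < (\<integral>x. (\<bar>f x - t1\<bar> powr r + \<bar>f x - t2\<bar> powr r) / 2 \<partial>M)"
    unfolding moment_def
  proof (rule integral_less_AE_space)
    show "integrable M (\<lambda>x. (\<bar>f x - t1\<bar> powr r + \<bar>f x - t2\<bar> powr r) / 2)"
      using integrable_abs_diff_powr[OF r] by auto
    have "\<bar>f x - (t1 + t2) / 2\<bar> powr r < (\<bar>f x - t1\<bar> powr r + \<bar>f x - t2\<bar> powr r) / 2" for x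
      using abs_powr_midpoint_less[OF assms(1), of "f x - t1" "f x - t2"] assms(2)
      by (simp add: field_simps)
    then show "AE x in M. \<bar>f x - (t1 + t2) / 2\<bar> powr r
        < (\<bar>f x - t1\<bar> powr r + \<bar>f x - t2\<bar> powr r) / 2"
      by simp
    show "emeasure M (space M) \<noteq> 0"
      using measure_space_pos by (simp add: emeasure_eq_measure)
  qed (rule integrable_abs_diff_powr[OF r])
  also have "\<dots> = (moment r t1 + moment r t2) / 2"
    unfolding moment_def using integrable_abs_diff_powr[OF r] by simp
  finally show ?thesis .
qed

lemma moment_minimizer_unique:
  assumes "2 \<le> r" "\<forall>s. moment r t1 \<le> moment r s" "\<forall>s. moment r t2 \<le> moment r s"
  shows "t1 = t2"
proof (rule ccontr)
  assume "t1 \<noteq> t2"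
  then show False
    using moment_midpoint_less[OF assms(1)] assms(2,3)[rule_format, of "(t1 + t2) / 2"]
    by fastforce
qed

lemma Lr_norm_le_iff_moment_le:
  assumes "0 < r"
  shows "Lr_norm M r (\<lambda>x. f x - t) \<le> Lr_norm M r (\<lambda>x. f x - s) \<longleftrightarrow> moment r t \<le> moment r s"
proof -
  have "a powr (1 / r) \<le> b powr (1 / r) \<longleftrightarrow> a \<le> b" if "0 \<le> a" "0 \<le> b" for a b :: real
  proof
    show "a \<le> b" if "a powr (1 / r) \<le> b powr (1 / r)"
    proof (rule ccontr)
      assume "\<not> a \<le> b"
      then have "b powr (1 / r) < a powr (1 / r)"
        using \<open>0 \<le> b\<close> assms by (intro powr_less_mono2) auto
      then show False
        using that by simp
    qed
  qed (use that assms in \<open>auto intro: powr_mono2\<close>)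
  then show ?thesis
    unfolding Lr_norm_def moment_def[symmetric] using moment_nonneg by simp
qed

lemma tau_eqI:
  assumes "2 \<le> r" "\<forall>s. moment r t \<le> moment r s"
  shows "tau M r f = t"
proof -
  have "(\<forall>s. Lr_norm M r (\<lambda>x. f x - t') \<le> Lr_norm M r (\<lambda>x. f x - s))
      \<longleftrightarrow> (\<forall>s. moment r t' \<le> moment r s)" for t'
    using assms(1) Lr_norm_le_iff_moment_le[of r t'] by simp
  then show ?thesis
    unfolding tau_def using assms moment_minimizer_unique[OF assms(1)] by (intro the_equality) auto
qed

lemma tau_minimizes:
  assumes "2 \<le> r"
  shows "moment r (tau M r f) \<le> moment r s"
proof -
  have "1 \<le> r"
    using assms by simp
  then obtain t where t: "\<And>s. moment r t \<le> moment r s"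
    using moment_has_minimizer by blast
  then have "tau M r f = t"
    by (intro tau_eqI[OF assms]) simp
  with t show ?thesis
    by simp
qed

lemma finite_moments_uminus: "finite_moments M (\<lambda>x. - f x)"
  by (intro finite_moments.intro finite_moments_axioms.intro finite_measure_axioms)
    (auto simp: measure_space_pos integrable_abs_powr)

lemma tau_uminus:
  assumes "2 \<le> r"
  shows "tau M r (\<lambda>x. - f x) = - tau M r f"
proof -
  interpret neg: finite_moments M "\<lambda>x. - f x"
    by (rule finite_moments_uminus)
  have "neg.moment r t = moment r (- t)" for t
    unfolding neg.moment_def moment_def by (simp add: abs_minus_commute add.commute)
  then show ?thesis
    using tau_minimizes[OF assms] by (intro neg.tau_eqI[OF assms]) simp
qed

lemma measure_mult_powr_le_moment:
  assumes "1 \<le> r" "A \<in> sets M" "0 \<le> c" "\<And>x. x \<in> A \<Longrightarrow> c \<le> \<bar>f x - t\<bar>"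
  shows "measure M A * c powr r \<le> moment r t"
proof -
  have "measure M A * c powr r = (\<integral>x. indicator A x * c powr r \<partial>M)"
    using assms(2) by simp
  also have "\<dots> \<le> moment r t"
    unfolding moment_def
  proof (intro integral_mono integrable_abs_diff_powr assms(1))
    show "integrable M (\<lambda>x. indicator A x * c powr r)"
      using assms(2)
      by (intro integrable_mult_left integrable_real_indicator) (auto simp: less_top[symmetric])
    show "indicator A x * c powr r \<le> \<bar>f x - t\<bar> powr r" for x
      using assms by (cases "x \<in> A") (auto intro: powr_mono2)
  qed
  finally show ?thesis .
qed

lemma moment_le_measure_mult_powr:
  assumes "1 \<le> r" "AE x in M. \<bar>f x - t\<bar> \<le> c"
  shows "moment r t \<le> measure M (space M) * c powr r"
proof -
  have "moment r t \<le> (\<integral>x. c powr r \<partial>M)"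
    unfolding moment_def using assms
    by (intro integral_mono_AE integrable_abs_diff_powr assms(1))
      (auto elim!: eventually_mono intro: powr_mono2)
  then show ?thesis
    by simp
qed

lemma eventually_tau_less_midpoint:
  assumes inf: "essinf M (\<lambda>x. ereal (f x)) = ereal L"
    and sup: "AE x in M. f x \<le> U" and "0 < \<epsilon>"
  shows "\<forall>\<^sub>F r in at_top. tau M r f < (L + U) / 2 + \<epsilon>"
proof -
  have above: "AE x in M. L \<le> f x"
    using essinf_AE[of "\<lambda>x. ereal (f x)" M] inf by simp
  with sup have dev: "AE x in M. \<bar>f x - (L + U) / 2\<bar> \<le> (U - L) / 2"
    by eventually_elim (simp add: abs_le_iff field_simps)
  have "AE x in M. L \<le> U"
    using above sup by eventually_elim simp
  then have "L \<le> U"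
    by (simp add: AE_const_iff)
  define A where "A = {x \<in> space M. f x < L + \<epsilon> / 2}"
  have "0 < measure M A"
    using essinf_pos_measure[of "\<lambda>x. ereal (f x)" M "ereal (L + \<epsilon> / 2)"] inf \<open>0 < \<epsilon>\<close>
    by (simp add: A_def emeasure_eq_measure)
  then have "\<forall>\<^sub>F r in at_top.
      measure M (space M) * ((U - L) / 2) powr r < measure M A * ((U - L) / 2 + \<epsilon> / 2) powr r"
    using \<open>L \<le> U\<close> \<open>0 < \<epsilon>\<close> by (intro eventually_mult_powr_less) auto
  moreover have "\<forall>\<^sub>F r in at_top. (2::real) \<le> r"
    by (rule eventually_ge_at_top)
  ultimately show ?thesis
  proof eventually_elim
    case (elim r)
    show ?case
    proof (rule ccontr)
      assume far: "\<not> tau M r f < (L + U) / 2 + \<epsilon>"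
      have "moment r ((L + U) / 2) \<le> measure M (space M) * ((U - L) / 2) powr r"
        using elim dev by (intro moment_le_measure_mult_powr) auto
      also have "\<dots> < measure M A * ((U - L) / 2 + \<epsilon> / 2) powr r"
        using elim by simp
      also have "\<dots> \<le> moment r (tau M r f)"
        using elim far \<open>L \<le> U\<close> \<open>0 < \<epsilon>\<close>
        by (intro measure_mult_powr_le_moment) (auto simp: A_def abs_if field_simps)
      finally show False
        using tau_minimizes[of r "(L + U) / 2"] elim by simp
    qed
  qed
qed

lemma eventually_tau_greater:
  assumes inf: "AE x in M. L \<le> f x" and sup: "esssup M (\<lambda>x. ereal (f x)) = \<infinity>"
  shows "\<forall>\<^sub>F r in at_top. K < tau M r f"
proof -
  define s where "s = max K L + 1"
  define d where "d = s - L"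
  define B where "B = {x \<in> space M. s + 2 * d < f x}"
  have "1 \<le> d"
    by (simp add: s_def d_def)
  have B: "B \<in> sets M"
    unfolding B_def by measurable
  have integrable_B: "integrable M (\<lambda>x. indicator B x * c)" for c :: real
    using B by (intro integrable_mult_left integrable_real_indicator) (auto simp: less_top[symmetric])
  have "0 < measure M B"
    using esssup_pos_measure[of "\<lambda>x. ereal (f x)" M "ereal (s + 2 * d)"] sup
    by (simp add: B_def emeasure_eq_measure)
  then have "\<forall>\<^sub>F r in at_top.
      measure M (space M) * d powr r < measure M B / (2 * d) * (2 * d) powr r"
    using \<open>1 \<le> d\<close> by (intro eventually_mult_powr_less) auto
  moreover have "\<forall>\<^sub>F r in at_top. (2::real) \<le> r"
    by (rule eventually_ge_at_top)
  ultimately show ?thesis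
  proof eventually_elim
    case (elim r)
    show ?case
    proof (rule ccontr)
      let ?t = "tau M r f"
      assume "\<not> K < ?t"
      then have "?t + 1 \<le> s"
        by (simp add: s_def)
      have "moment r s - moment r ?t = (\<integral>x. \<bar>f x - s\<bar> powr r - \<bar>f x - ?t\<bar> powr r \<partial>M)"
        using elim integrable_abs_diff_powr by (simp add: moment_def)
      also have "\<dots> \<le> (\<integral>x. d powr r - indicator B x * (2 * d) powr (r - 1) \<partial>M)"
      proof (intro integral_mono_AE)
        show "integrable M (\<lambda>x. \<bar>f x - s\<bar> powr r - \<bar>f x - ?t\<bar> powr r)"
          using elim integrable_abs_diff_powr by auto
        show "integrable M (\<lambda>x. d powr r - indicator B x * (2 * d) powr (r - 1))"
          using integrable_B by auto
        show "AE x in M. \<bar>f x - s\<bar> powr r - \<bar>f x - ?t\<bar> powr r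
            \<le> d powr r - indicator B x * (2 * d) powr (r - 1)"
          using inf AE_space
        proof eventually_elim
          case (elim x)
          then have "s - d \<le> f x"
            by (simp add: d_def)
          then show ?case
            using abs_powr_shift_le[of r d s "f x" ?t] \<open>r \<ge> 2\<close> \<open>1 \<le> d\<close> \<open>?t + 1 \<le> s\<close> elim
            by (auto simp: B_def indicator_def)
        qed
      qed
      also have "\<dots> = measure M (space M) * d powr r - measure M B * (2 * d) powr (r - 1)"
        using B by (subst Bochner_Integration.integral_diff[OF _ integrable_B]) auto
      also have "\<dots> = measure M (space M) * d powr r - measure M B / (2 * d) * (2 * d) powr r"
        using \<open>1 \<le> d\<close> by (simp add: powr_diff)
      finally show False
        using tau_minimizes[of r s] elim by simp
    qed
  qed
qed

(* No hypothesis on f is needed: since -\<infinity> + \<infinity> = \<infinity> in ereal, the midpoint lies below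
   a real y only if esssup f < \<infinity>. *)
lemma eventually_tau_less:
  assumes "(essinf M (\<lambda>x. ereal (f x)) + esssup M (\<lambda>x. ereal (f x))) / 2 < ereal y"
  shows "\<forall>\<^sub>F r in at_top. tau M r f < y"
proof -
  let ?inf = "essinf M (\<lambda>x. ereal (f x))" and ?sup = "esssup M (\<lambda>x. ereal (f x))"
  have "?sup \<noteq> \<infinity>"
    using assms by auto
  with esssup_neq_MInfty obtain u where u: "?sup = ereal u"
    by (cases ?sup) auto
  have below: "AE x in M. f x \<le> u"
    using esssup_AE[of "\<lambda>x. ereal (f x)" M] u by simp
  consider l where "?inf = ereal l" | "?inf = -\<infinity>"
    using essinf_neq_PInfty by (cases ?inf) auto
  then show ?thesis
  proof cases
    case (1 l)
    with assms u have "0 < y - (l + u) / 2"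
      by simp
    from eventually_tau_less_midpoint[OF 1 below this] show ?thesis
      by simp
  next
    case 2
    interpret neg: finite_moments M "\<lambda>x. - f x"
      by (rule finite_moments_uminus)
    have "AE x in M. - u \<le> - f x"
      using below by auto
    moreover have "esssup M (\<lambda>x. ereal (- f x)) = \<infinity>"
      using 2 essinf_eq_uminus_esssup[of "\<lambda>x. ereal (f x)" M] by simp
    ultimately have "\<forall>\<^sub>F r in at_top. - y < tau M r (\<lambda>x. - f x)"
      by (rule neg.eventually_tau_greater)
    moreover have "\<forall>\<^sub>F r in at_top. (2::real) \<le> r"
      by (rule eventually_ge_at_top)
    ultimately show ?thesis
      by eventually_elim (simp add: tau_uminus)
  qed
qed

theorem tau_tendsto_midpoint:
  assumes "essinf M (\<lambda>x. ereal (f x)) \<noteq> -\<infinity> \<or> esssup M (\<lambda>x. ereal (f x)) \<noteq> \<infinity>"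
  shows "((\<lambda>r. ereal (tau M r f)) \<longlongrightarrow>
    (essinf M (\<lambda>x. ereal (f x)) + esssup M (\<lambda>x. ereal (f x))) / 2) at_top"
proof (rule order_tendstoI)
  fix y
  assume "(essinf M (\<lambda>x. ereal (f x)) + esssup M (\<lambda>x. ereal (f x))) / 2 < y"
  then show "\<forall>\<^sub>F r in at_top. ereal (tau M r f) < y"
    by (cases y) (auto intro: eventually_tau_less)
next
  fix y
  assume less: "y < (essinf M (\<lambda>x. ereal (f x)) + esssup M (\<lambda>x. ereal (f x))) / 2"
  interpret neg: finite_moments M "\<lambda>x. - f x"
    by (rule finite_moments_uminus)
  have "essinf M (\<lambda>x. ereal (- f x)) = - esssup M (\<lambda>x. ereal (f x))"
    "esssup M (\<lambda>x. ereal (- f x)) = - essinf M (\<lambda>x. ereal (f x))"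
    using essinf_eq_uminus_esssup[of "\<lambda>x. ereal (- f x)" M]
      essinf_eq_uminus_esssup[of "\<lambda>x. ereal (f x)" M] by simp_all
  then have neg_midpoint:
    "(essinf M (\<lambda>x. ereal (- f x)) + esssup M (\<lambda>x. ereal (- f x))) / 2
      = - ((essinf M (\<lambda>x. ereal (f x)) + esssup M (\<lambda>x. ereal (f x))) / 2)"
    using assms essinf_neq_PInfty esssup_neq_MInfty
    by (cases "essinf M (\<lambda>x. ereal (f x))"; cases "esssup M (\<lambda>x. ereal (f x))")
      (simp_all add: field_simps)
  show "\<forall>\<^sub>F r in at_top. y < ereal (tau M r f)"
  proof (cases y)
    case (real z)
    then have "\<forall>\<^sub>F r in at_top. tau M r (\<lambda>x. - f x) < - z"
      using less neg_midpoint by (intro neg.eventually_tau_less) (simp add: ereal_uminus_less_reorder)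
    moreover have "\<forall>\<^sub>F r in at_top. (2::real) \<le> r"
      by (rule eventually_ge_at_top)
    ultimately show ?thesis
      unfolding real by eventually_elim (simp add: tau_uminus)
  qed (use less in auto)
qed

end

theorem theorem4:
  fixes a b :: real and f :: "real \<Rightarrow> real"
  assumes "a < b"
    and "f \<in> borel_measurable (lebesgue_on {a..b})"
    and "\<forall>r\<ge>1. integrable (lebesgue_on {a..b}) (\<lambda>x. \<bar>f x\<bar> powr r)"
    and "esssup (lebesgue_on {a..b}) (\<lambda>x. ereal (max (- f x) 0)) < \<infinity>
       \<or> esssup (lebesgue_on {a..b}) (\<lambda>x. ereal (max (f x) 0)) < \<infinity>"
  shows "((\<lambda>r. ereal (tau (lebesgue_on {a..b}) r f)) \<longlongrightarrow>
           (essinf (lebesgue_on {a..b}) (\<lambda>x. ereal (f x))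
            + esssup (lebesgue_on {a..b}) (\<lambda>x. ereal (f x))) / 2) at_top"
proof -
  let ?M = "lebesgue_on {a..b}"
  have [measurable]: "f \<in> borel_measurable ?M"
    by (fact assms(2))
  interpret finite_moments ?M f
  proof (intro finite_moments.intro finite_moments_axioms.intro finite_measure_lebesgue_on)
    show "0 < measure ?M (space ?M)"
      using assms(1) by (simp add: measure_restrict_space)
  qed (use assms(2,3) in auto)
  have "esssup ?M (\<lambda>x. ereal (- f x)) < \<infinity> \<or> esssup ?M (\<lambda>x. ereal (f x)) < \<infinity>"
    using assms(4) esssup_mono[of "\<lambda>x. ereal (- f x)" ?M "\<lambda>x. ereal (max (- f x) 0)"]
      esssup_mono[of "\<lambda>x. ereal (f x)" ?M "\<lambda>x. ereal (max (f x) 0)"]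
    by fastforce
  then have "essinf ?M (\<lambda>x. ereal (f x)) \<noteq> -\<infinity> \<or> esssup ?M (\<lambda>x. ereal (f x)) \<noteq> \<infinity>"
    using essinf_eq_uminus_esssup[of "\<lambda>x. ereal (f x)" ?M] by auto
  then show ?thesis
    by (rule tau_tendsto_midpoint)
qed

end
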